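(* Let $[n]$ be a set of items, $\boldsymbol\theta=(\boldsymbol\theta_1,\dots,\boldsymbol\theta_n)$ a vector of independent non-negative real random variables, $f:\mathbb{R}^n_{\ge0}\to\mathbb{R}_{\ge0}$ a monotone submodular value function, and $k\in[n]$. Let $\pi$ be an optimal adaptive policy selecting $k$ items, and let $x_i$ be the probability that item $i$ is selected by $\pi$. Let $\hat{\boldsymbol\theta}$ be a random vector with the same distribution as $\boldsymbol\theta$ and independent of $\boldsymbol\theta$. Then for every $S\subseteq[n]$, $$\mathbb{E}_{\boldsymbol\theta,\hat{\boldsymbol\theta}}\big[f\big(\boldsymbol\theta(S)\vee\hat{\boldsymbol\theta}(U_{\hat{\boldsymbol\theta},k}(\pi)\cup S)\big)\big]\le \mathbb{E}_{\boldsymbol\theta,\hat{\boldsymbol\theta}}\big[f(\boldsymbol\theta(S)\vee\hat{\boldsymbol\theta}(S))\big]+\sum_{i\in[n]\setminus S}x_i\,\mathbb{E}_{\boldsymbol\theta}\big[\Delta(i\mid\boldsymbol\theta(S))\big].$$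
   Context: A monotone submodular value function $f$ is non-decreasing in each coordinate and satisfies $f(x\vee y)+f(x\wedge y)\le f(x)+f(y)$ for all $x,y\in\mathbb{R}^n_{\ge0}$ ($\vee,\wedge$ componentwise max/min). For $S\subseteq[n]$, $\boldsymbol\theta(S)$ is the random vector with $i$-th coordinate $\boldsymbol\theta_i$ if $i\in S$ and $0$ otherwise (observing it also reveals $S$); similarly for $\hat{\boldsymbol\theta}(S)$. An adaptive policy $\pi$ starts with $U=\emptyset$ and for $k$ steps observes the partial state $\xi=\boldsymbol\theta(U)$ and adds an item $\pi(\xi)\in[n]\setminus U$ to $U$; the final set is $U_{\boldsymbol\theta,k}(\pi)$, and $U_{\hat{\boldsymbol\theta},k}(\pi)$ is the set obtained when the policy observes partial states of $\hat{\boldsymbol\theta}$ instead. $\pi$ is optimal if it maximizes $\mathbb{E}[f(\boldsymbol\theta(U_{\boldsymbol\theta,k}(\pi)))]$. For $i\in[n]$, $\mathbf e^i$ is a random vector (independent of everything else) whose $i$-th coordinate has the distribution of $\boldsymbol\theta_i$ and whose other coordinates are $0$; for a partial state $\xi$, $\Delta(i\mid\xi):=\mathbb{E}_{\mathbf e^i}[f(\xi\vee\mathbf e^i)-f(\xi)]$. *)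

theory Defs
  imports "HOL-Probability.Probability"
begin

text \<open>Items are the elements of a finite type 'n (so [n] = UNIV). Value vectors are
  functions 'n => real; the product sigma-algebra is PiM UNIV (\<lambda>_. borel).\<close>

definition restr :: "'n set \<Rightarrow> ('n \<Rightarrow> real) \<Rightarrow> ('n \<Rightarrow> real)" where
  "restr S v = (\<lambda>i. if i \<in> S then v i else 0)"

text \<open>A (deterministic) adaptive policy maps the partial state (U, theta(U)) to the next item.
  run pi theta j is the set selected after j steps.\<close>
fun run :: "('n set \<Rightarrow> ('n \<Rightarrow> real) \<Rightarrow> 'n) \<Rightarrow> ('n \<Rightarrow> real) \<Rightarrow> nat \<Rightarrow> 'n set" where
  "run p \<theta> 0 = {}"
| "run p \<theta> (Suc j) = insert (p (run p \<theta> j) (restr (run p \<theta> j) \<theta>)) (run p \<theta> j)"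

definition Theta :: "('n::finite \<Rightarrow> real measure) \<Rightarrow> ('n \<Rightarrow> real) measure" where
  "Theta D = PiM UNIV D"

definition admissible_policy :: "nat \<Rightarrow> ('n set \<Rightarrow> ('n \<Rightarrow> real) \<Rightarrow> 'n) \<Rightarrow> bool" where
  "admissible_policy k p \<longleftrightarrow>
     (\<forall>U \<xi>. card U < k \<longrightarrow> p U \<xi> \<notin> U) \<and>
     (\<forall>U. p U \<in> measurable (PiM UNIV (\<lambda>_. borel)) (count_space UNIV))"

definition policy_value ::
  "('n::finite \<Rightarrow> real measure) \<Rightarrow> (('n \<Rightarrow> real) \<Rightarrow> real) \<Rightarrow> nat
     \<Rightarrow> ('n set \<Rightarrow> ('n \<Rightarrow> real) \<Rightarrow> 'n) \<Rightarrow> ennreal" where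
  "policy_value D f k p = (\<integral>\<^sup>+ \<theta>. ennreal (f (restr (run p \<theta> k) \<theta>)) \<partial>Theta D)"

definition optimal_policy ::
  "('n::finite \<Rightarrow> real measure) \<Rightarrow> (('n \<Rightarrow> real) \<Rightarrow> real) \<Rightarrow> nat
     \<Rightarrow> ('n set \<Rightarrow> ('n \<Rightarrow> real) \<Rightarrow> 'n) \<Rightarrow> bool" where
  "optimal_policy D f k p \<longleftrightarrow> admissible_policy k p \<and>
     (\<forall>p'. admissible_policy k p' \<longrightarrow> policy_value D f k p' \<le> policy_value D f k p)"

definition sel_prob ::
  "('n::finite \<Rightarrow> real measure) \<Rightarrow> nat \<Rightarrow> ('n set \<Rightarrow> ('n \<Rightarrow> real) \<Rightarrow> 'n) \<Rightarrow> 'n \<Rightarrow> ennreal" where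
  "sel_prob D k p i = emeasure (Theta D) {\<theta> \<in> space (Theta D). i \<in> run p \<theta> k}"

definition Delta ::
  "('n \<Rightarrow> real measure) \<Rightarrow> (('n \<Rightarrow> real) \<Rightarrow> real) \<Rightarrow> 'n \<Rightarrow> ('n \<Rightarrow> real) \<Rightarrow> ennreal" where
  "Delta D f i \<xi> = (\<integral>\<^sup>+ t. ennreal (f (sup \<xi> (\<lambda>j. if j = i then t else 0)) - f \<xi>) \<partial>D i)"

end

(*
  Fix \<theta> and run the policy on \<theta>'.  If the item i chosen at step j lies outside S, then by
  submodularity the resulting increase of f (\<theta>(S) \<or> \<theta>'(U \<union> S)) is at most the gain of adding
  \<theta>'_i to \<theta>(S) alone.  As the policy has not yet observed \<theta>'_i, neither the current set U
  nor the event "i is chosen at step j" depends on \<theta>'_i, so integrating \<theta>'_i out first bounds the expected increase by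
  \<Delta>(i | \<theta>(S)) times the probability that i is chosen at step j; summing over the k steps
  turns these probabilities into x_i.
*)

theory Submission
  imports Defs
begin

definition next_item :: "('n set \<Rightarrow> ('n \<Rightarrow> real) \<Rightarrow> 'n) \<Rightarrow> ('n \<Rightarrow> real) \<Rightarrow> nat \<Rightarrow> 'n" where
  "next_item p \<theta> j = p (run p \<theta> j) (restr (run p \<theta> j) \<theta>)"

lemma run_Suc_next_item [simp]: "run p \<theta> (Suc j) = insert (next_item p \<theta> j) (run p \<theta> j)"
  by (simp add: next_item_def)

declare run.simps(2) [simp del]

lemma finite_run: "finite (run p \<theta> j)"
  by (induction j) auto

lemma card_run:
  assumes "admissible_policy k p" "j \<le> k"
  shows "card (run p \<theta> j) = j"
  using assms(2)
proof (induction j)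
  case (Suc j)
  then have "next_item p \<theta> j \<notin> run p \<theta> j"
    using assms(1) by (auto simp: admissible_policy_def next_item_def)
  then show ?case using Suc finite_run[of p \<theta> j] by simp
qed simp

lemma next_item_notin_run:
  assumes "admissible_policy k p" "j < k"
  shows "next_item p \<theta> j \<notin> run p \<theta> j"
  using assms card_run[OF assms(1), of j \<theta>] by (simp add: admissible_policy_def next_item_def)

lemma restr_fun_upd_notin: "i \<notin> U \<Longrightarrow> restr U (\<theta>(i := y)) = restr U \<theta>"
  by (auto simp: restr_def)

lemma run_fun_upd_notin: "i \<notin> run p \<theta> j \<Longrightarrow> run p (\<theta>(i := y)) j = run p \<theta> j"
proof (induction j)
  case (Suc j)
  then have "i \<notin> run p \<theta> j" by auto
  with Suc.IH show ?case
    by (simp add: next_item_def restr_fun_upd_notin del: fun_upd_apply)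
qed simp

lemma next_item_fun_upd_notin:
  "i \<notin> run p \<theta> j \<Longrightarrow> next_item p (\<theta>(i := y)) j = next_item p \<theta> j"
  by (simp add: next_item_def run_fun_upd_notin restr_fun_upd_notin del: fun_upd_apply)

lemma next_item_fun_upd_eq_self_iff:
  assumes "admissible_policy k p" "j < k"
  shows "next_item p (\<theta>(i := y)) j = i \<longleftrightarrow> next_item p \<theta> j = i"
proof
  assume "next_item p (\<theta>(i := y)) j = i"
  then have "i \<notin> run p (\<theta>(i := y)) j"
    using next_item_notin_run[OF assms] by metis
  from next_item_fun_upd_notin[OF this, of "\<theta> i"] \<open>next_item p (\<theta>(i := y)) j = i\<close>
  show "next_item p \<theta> j = i" by simp
next
  assume "next_item p \<theta> j = i"
  then show "next_item p (\<theta>(i := y)) j = i"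
    using next_item_fun_upd_notin next_item_notin_run[OF assms] by metis
qed

lemma sum_indicator_next_item:
  assumes "admissible_policy k p" "j \<le> k"
  shows "(\<Sum>j'<j. indicator {\<theta>. next_item p \<theta> j' = i} \<theta> :: 'a::semiring_1)
    = indicator {\<theta>. i \<in> run p \<theta> j} \<theta>"
  using assms(2)
proof (induction j)
  case (Suc j)
  then have "next_item p \<theta> j \<notin> run p \<theta> j"
    using next_item_notin_run[OF assms(1)] by simp
  moreover have "(\<Sum>j'<Suc j. indicator {\<theta>. next_item p \<theta> j' = i} \<theta> :: 'a)
      = indicator {\<theta>. i \<in> run p \<theta> j} \<theta> + indicator {\<theta>. next_item p \<theta> j = i} \<theta>"
    using Suc by simp
  ultimately show ?case by (auto simp: indicator_def)
qed simp

lemma measurable_restr [measurable]: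
  "g \<in> measurable M (PiM UNIV (\<lambda>_. borel)) \<Longrightarrow>
    (\<lambda>x. restr U (g x)) \<in> measurable M (PiM UNIV (\<lambda>_. borel :: real measure))"
  unfolding restr_def by (rule measurable_PiM_single') (auto simp: measurable_PiM_component_rev)

lemma measurable_coordinate_vector [measurable]:
  "g \<in> borel_measurable M \<Longrightarrow>
    (\<lambda>x. \<lambda>l. if l = i then g x else 0) \<in> measurable M (PiM UNIV (\<lambda>_. borel :: real measure))"
  by (rule measurable_PiM_single') auto

lemma measurable_sup_fun [measurable]:
  assumes "g \<in> measurable M (PiM UNIV (\<lambda>_. borel))" "h \<in> measurable M (PiM UNIV (\<lambda>_. borel))"
  shows "(\<lambda>x. sup (g x) (h x)) \<in> measurable M (PiM UNIV (\<lambda>_. borel :: real measure))"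
  unfolding sup_fun_def using assms by (intro measurable_PiM_single') (auto simp: measurable_PiM_component_rev)

context
  fixes p :: "'n::finite set \<Rightarrow> ('n \<Rightarrow> real) \<Rightarrow> 'n"
  assumes p_meas [measurable]: "\<And>U. p U \<in> measurable (PiM UNIV (\<lambda>_. borel)) (count_space UNIV)"
begin

lemma measurable_run [measurable]:
  "(\<lambda>\<theta>. run p \<theta> j) \<in> measurable (PiM UNIV (\<lambda>_. borel)) (count_space UNIV)"
proof (induction j)
  case (Suc j)
  have "(\<lambda>\<theta>. insert (p U (restr U \<theta>)) U) \<in> measurable (PiM UNIV (\<lambda>_. borel)) (count_space UNIV)" for U
    by measurable
  from measurable_compose_countable[where f="\<lambda>U \<theta>. insert (p U (restr U \<theta>)) U", OF this Suc]
  show ?case by (simp add: next_item_def)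
qed simp

lemma measurable_next_item:
  "(\<lambda>\<theta>. next_item p \<theta> j) \<in> measurable (PiM UNIV (\<lambda>_. borel)) (count_space UNIV)"
proof -
  have "(\<lambda>\<theta>. p U (restr U \<theta>)) \<in> measurable (PiM UNIV (\<lambda>_. borel)) (count_space UNIV)" for U
    by measurable
  from measurable_compose_countable[OF this measurable_run] show ?thesis
    by (simp add: next_item_def)
qed

lemma sets_next_item_eq [measurable]:
  "{\<theta>. next_item p \<theta> j = i} \<in> sets (PiM UNIV (\<lambda>_. borel))"
  using measurable_sets[OF measurable_next_item, of "{i}"] by (simp add: vimage_def space_PiM)

lemma sets_mem_run [measurable]:
  "{\<theta>. i \<in> run p \<theta> j} \<in> sets (PiM UNIV (\<lambda>_. borel))"
  using measurable_sets[OF measurable_run, of "{U. i \<in> U}"] by (simp add: vimage_def space_PiM)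

end

lemma ennreal_le_add_diff: "ennreal x \<le> ennreal y + ennreal (x - y)"
proof -
  have "ennreal x \<le> ennreal (max 0 y + max 0 (x - y))" by (rule ennreal_leI) linarith
  also have "\<dots> = ennreal y + ennreal (x - y)" by (simp add: max_def ennreal_neg)
  finally show ?thesis .
qed

lemma submodular_diminishing_returns:
  fixes f :: "('n \<Rightarrow> real) \<Rightarrow> real"
  assumes submod: "\<And>x y. (\<forall>i. 0 \<le> x i) \<Longrightarrow> (\<forall>i. 0 \<le> y i) \<Longrightarrow> f (sup x y) + f (inf x y) \<le> f x + f y"
    and "\<forall>l. 0 \<le> \<xi>\<^sub>0 l" "\<xi>\<^sub>0 \<le> \<xi>" "\<xi>\<^sub>0 i = 0" "\<xi> i = 0" "0 \<le> t"
  shows "f (\<xi>(i := t)) - f \<xi> \<le> f (\<xi>\<^sub>0(i := t)) - f \<xi>\<^sub>0"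
proof -
  have "sup (\<xi>\<^sub>0(i := t)) \<xi> = \<xi>(i := t)" "inf (\<xi>\<^sub>0(i := t)) \<xi> = \<xi>\<^sub>0"
    using assms by (auto simp: le_fun_def sup_fun_def inf_fun_def sup_max inf_min max_def min_def)
  moreover have "f (sup (\<xi>\<^sub>0(i := t)) \<xi>) + f (inf (\<xi>\<^sub>0(i := t)) \<xi>) \<le> f (\<xi>\<^sub>0(i := t)) + f \<xi>"
    using assms by (intro submod) (auto simp: le_fun_def intro: order.trans)
  ultimately show ?thesis by simp
qed

lemma nn_integral_indicator_mult_le:
  fixes M :: "'i::finite \<Rightarrow> 'a measure" and G :: "('i \<Rightarrow> 'a) \<Rightarrow> ennreal"
  assumes prob: "\<And>i. prob_space (M i)"
    and G: "G \<in> borel_measurable (PiM UNIV M)" and E: "E \<in> sets (PiM UNIV M)"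
    and E_indep: "\<And>x y. x(i := y) \<in> E \<longleftrightarrow> x \<in> E"
    and G_le: "\<And>x y. x \<in> E \<Longrightarrow> G (x(i := y)) \<le> h y"
  shows "(\<integral>\<^sup>+x. indicator E x * G x \<partial>PiM UNIV M) \<le> (\<integral>\<^sup>+y. h y \<partial>M i) * emeasure (PiM UNIV M) E"
proof -
  interpret product_prob_space M
    by (simp add: product_prob_space_def product_prob_space_axioms_def product_sigma_finite_def
        prob prob_space_imp_sigma_finite)
  define c where "c = (\<integral>\<^sup>+y. h y \<partial>M i)"
  have UNIV_eq: "UNIV = insert i (UNIV - {i})" by auto
  have inner: "(\<integral>\<^sup>+y. indicator E (x(i := y)) * G (x(i := y)) \<partial>M i)
      \<le> (\<integral>\<^sup>+y. c * indicator E (x(i := y)) \<partial>M i)" for x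
  proof (cases "x \<in> E")
    case True
    then have "(\<integral>\<^sup>+y. indicator E (x(i := y)) * G (x(i := y)) \<partial>M i) \<le> c"
      unfolding c_def using E_indep G_le by (auto intro!: nn_integral_mono)
    with True show ?thesis using E_indep by (simp add: M.emeasure_space_1)
  qed (simp add: E_indep)
  have "(\<integral>\<^sup>+x. indicator E x * G x \<partial>PiM UNIV M)
      = (\<integral>\<^sup>+x. \<integral>\<^sup>+y. indicator E (x(i := y)) * G (x(i := y)) \<partial>M i \<partial>PiM (UNIV - {i}) M)"
    using G E by (subst UNIV_eq, subst product_nn_integral_insert) (auto simp flip: UNIV_eq)
  also have "\<dots> \<le> (\<integral>\<^sup>+x. \<integral>\<^sup>+y. c * indicator E (x(i := y)) \<partial>M i \<partial>PiM (UNIV - {i}) M)"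
    using inner by (rule nn_integral_mono)
  also have "\<dots> = (\<integral>\<^sup>+x. c * indicator E x \<partial>PiM UNIV M)"
    using E by (subst (2) UNIV_eq, subst product_nn_integral_insert) (auto simp flip: UNIV_eq)
  also have "\<dots> = c * emeasure (PiM UNIV M) E"
    using E by (rule nn_integral_cmult_indicator)
  finally show ?thesis unfolding c_def .
qed

locale adaptive_selection =
  fixes D :: "'n::finite \<Rightarrow> real measure"
    and f :: "('n \<Rightarrow> real) \<Rightarrow> real"
    and k :: nat
    and p :: "'n set \<Rightarrow> ('n \<Rightarrow> real) \<Rightarrow> 'n"
  assumes prob: "\<And>i. prob_space (D i)"
    and sets_D: "\<And>i. sets (D i) = sets borel"
    and nonneg_D: "\<And>i. AE t in D i. 0 \<le> t"
    and f_meas [measurable]: "f \<in> borel_measurable (PiM UNIV (\<lambda>_. borel))"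
    and f_submod: "\<And>x y. (\<forall>i. 0 \<le> x i) \<Longrightarrow> (\<forall>i. 0 \<le> y i) \<Longrightarrow>
                      f (sup x y) + f (inf x y) \<le> f x + f y"
    and admissible: "admissible_policy k p"
begin

lemmas [measurable_cong] = sets_D

lemma p_meas: "p U \<in> measurable (PiM UNIV (\<lambda>_. borel)) (count_space UNIV)"
  using admissible by (simp add: admissible_policy_def)

lemmas [measurable] = measurable_run[OF p_meas] sets_next_item_eq[OF p_meas] sets_mem_run[OF p_meas]

lemma sets_Theta [measurable_cong]: "sets (Theta D) = sets (PiM UNIV (\<lambda>_. borel))"
  unfolding Theta_def by (rule sets_PiM_cong) (simp_all add: sets_D)

lemma measurable_Theta_iff: "measurable (Theta D) N = measurable (PiM UNIV (\<lambda>_. borel)) N"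
  by (rule measurable_cong_sets[OF sets_Theta refl])

lemma space_Theta [simp]: "space (Theta D) = UNIV"
  by (simp add: sets_eq_imp_space_eq[OF sets_Theta] space_PiM)

lemma prob_space_Theta: "prob_space (Theta D)"
  unfolding Theta_def by (rule prob_space_PiM) (rule prob)

lemma AE_Theta_nonneg: "AE \<theta> in Theta D. \<forall>l. 0 \<le> \<theta> l"
  unfolding Theta_def using prob nonneg_D
  by (intro AE_finite_allI[where S=UNIV, simplified] AE_PiM_component) auto

definition joint_value :: "'n set \<Rightarrow> ('n \<Rightarrow> real) \<Rightarrow> 'n set \<Rightarrow> ('n \<Rightarrow> real) \<Rightarrow> real" where
  "joint_value S \<theta> U \<theta>' = f (sup (restr S \<theta>) (restr (U \<union> S) \<theta>'))"

lemma measurable_joint_value_run [measurable]: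
  "(\<lambda>\<theta>'. joint_value S \<theta> (run p \<theta>' j) \<theta>') \<in> borel_measurable (Theta D)"
  unfolding measurable_Theta_iff joint_value_def
  by (rule measurable_compose_countable[where f="\<lambda>U \<theta>'. f (sup (restr S \<theta>) (restr (U \<union> S) \<theta>'))"])
    (measurable; simp add: space_PiM)+

lemma marginal_gain_le:
  assumes \<theta>: "\<forall>l. 0 \<le> \<theta> l" and "j < k" "i \<notin> S" and next_x: "next_item p x j = i"
  shows "joint_value S \<theta> (run p (x(i := y)) (Suc j)) (x(i := y)) - joint_value S \<theta> (run p (x(i := y)) j) (x(i := y))
    \<le> f (sup (restr S \<theta>) (\<lambda>l. if l = i then y else 0)) - f (restr S \<theta>)"
proof -
  have notin: "i \<notin> run p x j"
    using next_item_notin_run[OF admissible \<open>j < k\<close>] next_x by blast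
  then have run_eq: "run p (x(i := y)) j = run p x j" and next_eq: "next_item p (x(i := y)) j = i"
    using run_fun_upd_notin next_item_fun_upd_notin next_x by metis+
  define X where "X = sup (restr S \<theta>) (restr (run p x j \<union> S) x)"
  have "sup (restr S \<theta>) (restr (run p (x(i := y)) (Suc j) \<union> S) (x(i := y))) = X(i := max 0 y)"
    using notin \<open>i \<notin> S\<close> by (auto simp: run_eq next_eq X_def restr_def sup_fun_def sup_max)
  moreover have "sup (restr S \<theta>) (restr (run p (x(i := y)) j \<union> S) (x(i := y))) = X"
    using notin \<open>i \<notin> S\<close> by (auto simp: run_eq X_def restr_def)
  moreover have "sup (restr S \<theta>) (\<lambda>l. if l = i then y else 0) = (restr S \<theta>)(i := max 0 y)"
    using \<theta> \<open>i \<notin> S\<close> by (intro ext) (auto simp: restr_def sup_max max_def intro: order.antisym)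
  moreover have "f (X(i := max 0 y)) - f X \<le> f ((restr S \<theta>)(i := max 0 y)) - f (restr S \<theta>)"
    using \<theta> notin \<open>i \<notin> S\<close>
    by (intro submodular_diminishing_returns[OF f_submod]) (auto simp: X_def restr_def le_fun_def sup_fun_def sup_max)
  ultimately show ?thesis unfolding joint_value_def by simp
qed

lemma expected_marginal_gain_le:
  assumes "\<forall>l. 0 \<le> \<theta> l" "j < k" "i \<notin> S"
  shows "(\<integral>\<^sup>+\<theta>'. indicator {\<theta>'. next_item p \<theta>' j = i} \<theta>' *
      ennreal (joint_value S \<theta> (run p \<theta>' (Suc j)) \<theta>' - joint_value S \<theta> (run p \<theta>' j) \<theta>') \<partial>Theta D)
    \<le> Delta D f i (restr S \<theta>) * emeasure (Theta D) {\<theta>'. next_item p \<theta>' j = i}"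
  unfolding Delta_def
proof (rule nn_integral_indicator_mult_le[OF prob, folded Theta_def])
  show "(\<lambda>\<theta>'. ennreal (joint_value S \<theta> (run p \<theta>' (Suc j)) \<theta>' - joint_value S \<theta> (run p \<theta>' j) \<theta>'))
      \<in> borel_measurable (Theta D)"
    by measurable
  show "{\<theta>'. next_item p \<theta>' j = i} \<in> sets (Theta D)"
    by measurable
  show "x(i := y) \<in> {\<theta>'. next_item p \<theta>' j = i} \<longleftrightarrow> x \<in> {\<theta>'. next_item p \<theta>' j = i}" for x y
    using next_item_fun_upd_eq_self_iff[OF admissible \<open>j < k\<close>] by simp
  show "ennreal (joint_value S \<theta> (run p (x(i := y)) (Suc j)) (x(i := y)) - joint_value S \<theta> (run p (x(i := y)) j) (x(i := y)))
      \<le> ennreal (f (sup (restr S \<theta>) (\<lambda>l. if l = i then y else 0)) - f (restr S \<theta>))"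
    if "x \<in> {\<theta>'. next_item p \<theta>' j = i}" for x y
    using marginal_gain_le[OF assms] that by (simp add: ennreal_leI)
qed

lemma joint_value_run_Suc_le:
  "ennreal (joint_value S \<theta> (run p \<theta>' (Suc j)) \<theta>') \<le> ennreal (joint_value S \<theta> (run p \<theta>' j) \<theta>') +
    (\<Sum>i\<in>UNIV - S. indicator {\<theta>'. next_item p \<theta>' j = i} \<theta>' *
      ennreal (joint_value S \<theta> (run p \<theta>' (Suc j)) \<theta>' - joint_value S \<theta> (run p \<theta>' j) \<theta>'))"
proof (cases "next_item p \<theta>' j \<in> S")
  case True
  then have "run p \<theta>' (Suc j) \<union> S = run p \<theta>' j \<union> S" by auto
  then show ?thesis by (simp add: joint_value_def)
next
  case False
  then show ?thesis
    by (simp add: indicator_def sum.delta' ennreal_le_add_diff)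
qed

lemma expected_joint_value_run_le:
  assumes \<theta>: "\<forall>l. 0 \<le> \<theta> l" and "j \<le> k"
  shows "(\<integral>\<^sup>+\<theta>'. joint_value S \<theta> (run p \<theta>' j) \<theta>' \<partial>Theta D)
    \<le> (\<integral>\<^sup>+\<theta>'. joint_value S \<theta> {} \<theta>' \<partial>Theta D) +
      (\<Sum>i\<in>UNIV - S. Delta D f i (restr S \<theta>) * (\<Sum>j'<j. emeasure (Theta D) {\<theta>'. next_item p \<theta>' j' = i}))"
  using \<open>j \<le> k\<close>
proof (induction j)
  case (Suc j)
  define V where "V j \<theta>' = ennreal (joint_value S \<theta> (run p \<theta>' j) \<theta>')" for j \<theta>'
  define G where "G i \<theta>' = indicator {\<theta>'. next_item p \<theta>' j = i} \<theta>' *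
    ennreal (joint_value S \<theta> (run p \<theta>' (Suc j)) \<theta>' - joint_value S \<theta> (run p \<theta>' j) \<theta>')" for i \<theta>'
  define \<mu> where "\<mu> j i = emeasure (Theta D) {\<theta>'. next_item p \<theta>' j = i}" for j i
  have G_meas: "G i \<in> borel_measurable (Theta D)" for i
    unfolding G_def by measurable
  have "(\<integral>\<^sup>+\<theta>'. V (Suc j) \<theta>' \<partial>Theta D) \<le> (\<integral>\<^sup>+\<theta>'. V j \<theta>' + (\<Sum>i\<in>UNIV - S. G i \<theta>') \<partial>Theta D)"
    unfolding V_def G_def by (intro nn_integral_mono joint_value_run_Suc_le)
  also have "\<dots> = (\<integral>\<^sup>+\<theta>'. V j \<theta>' \<partial>Theta D) + (\<Sum>i\<in>UNIV - S. \<integral>\<^sup>+\<theta>'. G i \<theta>' \<partial>Theta D)"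
    using G_meas unfolding V_def by (simp add: nn_integral_add nn_integral_sum)
  also have "\<dots> \<le> (\<integral>\<^sup>+\<theta>'. V j \<theta>' \<partial>Theta D) + (\<Sum>i\<in>UNIV - S. Delta D f i (restr S \<theta>) * \<mu> j i)"
    using expected_marginal_gain_le[OF \<theta>] Suc.prems
    unfolding G_def \<mu>_def by (intro add_left_mono sum_mono) simp
  also have "\<dots> \<le> (\<integral>\<^sup>+\<theta>'. joint_value S \<theta> {} \<theta>' \<partial>Theta D) +
      (\<Sum>i\<in>UNIV - S. Delta D f i (restr S \<theta>) * (\<Sum>j'<j. \<mu> j' i)) +
      (\<Sum>i\<in>UNIV - S. Delta D f i (restr S \<theta>) * \<mu> j i)"
    using Suc unfolding V_def \<mu>_def by (intro add_right_mono) simp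
  also have "\<dots> = (\<integral>\<^sup>+\<theta>'. joint_value S \<theta> {} \<theta>' \<partial>Theta D) +
      (\<Sum>i\<in>UNIV - S. Delta D f i (restr S \<theta>) * (\<Sum>j'<Suc j. \<mu> j' i))"
    by (simp add: add.assoc distrib_left flip: sum.distrib)
  finally show ?case unfolding V_def \<mu>_def .
qed simp

lemma sel_prob_eq_sum: "sel_prob D k p i = (\<Sum>j<k. emeasure (Theta D) {\<theta>. next_item p \<theta> j = i})"
proof -
  have "sel_prob D k p i = (\<integral>\<^sup>+\<theta>. indicator {\<theta>. i \<in> run p \<theta> k} \<theta> \<partial>Theta D)"
    by (simp add: sel_prob_def)
  also have "\<dots> = (\<integral>\<^sup>+\<theta>. (\<Sum>j<k. indicator {\<theta>. next_item p \<theta> j = i} \<theta>) \<partial>Theta D)"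
    by (simp add: sum_indicator_next_item[OF admissible])
  also have "\<dots> = (\<Sum>j<k. emeasure (Theta D) {\<theta>. next_item p \<theta> j = i})"
    by (simp add: nn_integral_sum)
  finally show ?thesis .
qed

theorem expected_joint_value_le:
  "(\<integral>\<^sup>+\<theta>. \<integral>\<^sup>+\<theta>'. joint_value S \<theta> (run p \<theta>' k) \<theta>' \<partial>Theta D \<partial>Theta D)
    \<le> (\<integral>\<^sup>+\<theta>. \<integral>\<^sup>+\<theta>'. joint_value S \<theta> {} \<theta>' \<partial>Theta D \<partial>Theta D) +
      (\<Sum>i\<in>UNIV - S. sel_prob D k p i * (\<integral>\<^sup>+\<theta>. Delta D f i (restr S \<theta>) \<partial>Theta D))"
proof -
  interpret Theta: prob_space "Theta D" by (rule prob_space_Theta)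
  have [measurable]: "(\<lambda>\<theta>. \<integral>\<^sup>+\<theta>'. joint_value S \<theta> {} \<theta>' \<partial>Theta D) \<in> borel_measurable (Theta D)"
    unfolding joint_value_def by measurable
  have [measurable]: "(\<lambda>\<theta>. Delta D f i (restr S \<theta>)) \<in> borel_measurable (Theta D)" for i
  proof -
    interpret sigma_finite_measure "D i"
      using prob by (rule prob_space_imp_sigma_finite)
    show ?thesis unfolding Delta_def measurable_Theta_iff by measurable
  qed
  have "(\<integral>\<^sup>+\<theta>. \<integral>\<^sup>+\<theta>'. joint_value S \<theta> (run p \<theta>' k) \<theta>' \<partial>Theta D \<partial>Theta D)
      \<le> (\<integral>\<^sup>+\<theta>. (\<integral>\<^sup>+\<theta>'. joint_value S \<theta> {} \<theta>' \<partial>Theta D) +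
          (\<Sum>i\<in>UNIV - S. sel_prob D k p i * Delta D f i (restr S \<theta>)) \<partial>Theta D)"
    using AE_Theta_nonneg
    by (intro nn_integral_mono_AE, eventually_elim)
      (simp add: expected_joint_value_run_le sel_prob_eq_sum mult.commute)
  also have "\<dots> = (\<integral>\<^sup>+\<theta>. \<integral>\<^sup>+\<theta>'. joint_value S \<theta> {} \<theta>' \<partial>Theta D \<partial>Theta D) +
      (\<Sum>i\<in>UNIV - S. sel_prob D k p i * (\<integral>\<^sup>+\<theta>. Delta D f i (restr S \<theta>) \<partial>Theta D))"
    by (simp add: nn_integral_add nn_integral_sum nn_integral_cmult)
  finally show ?thesis .
qed

end

theorem lemma3:
  fixes D :: "'n::finite \<Rightarrow> real measure"
    and f :: "('n \<Rightarrow> real) \<Rightarrow> real"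
    and k :: nat
    and p :: "'n set \<Rightarrow> ('n \<Rightarrow> real) \<Rightarrow> 'n"
    and S :: "'n set"
  assumes prob: "\<And>i. prob_space (D i)"
    and sets_D: "\<And>i. sets (D i) = sets borel"
    and nonneg_D: "\<And>i. AE t in D i. 0 \<le> t"
    and f_meas: "f \<in> borel_measurable (PiM UNIV (\<lambda>_. borel))"
    and f_nonneg: "\<And>x. (\<forall>i. 0 \<le> x i) \<Longrightarrow> 0 \<le> f x"
    and f_mono: "\<And>x y. (\<forall>i. 0 \<le> x i) \<Longrightarrow> (\<forall>i. x i \<le> y i) \<Longrightarrow> f x \<le> f y"
    and f_submod: "\<And>x y. (\<forall>i. 0 \<le> x i) \<Longrightarrow> (\<forall>i. 0 \<le> y i) \<Longrightarrow>
                      f (sup x y) + f (inf x y) \<le> f x + f y"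
    and k_pos: "1 \<le> k" and k_le: "k \<le> CARD('n)"
    and opt: "optimal_policy D f k p"
  shows "(\<integral>\<^sup>+ \<theta>. \<integral>\<^sup>+ \<theta>'. ennreal (f (sup (restr S \<theta>) (restr (run p \<theta>' k \<union> S) \<theta>')))
             \<partial>Theta D \<partial>Theta D)
         \<le> (\<integral>\<^sup>+ \<theta>. \<integral>\<^sup>+ \<theta>'. ennreal (f (sup (restr S \<theta>) (restr S \<theta>'))) \<partial>Theta D \<partial>Theta D)
           + (\<Sum>i\<in>UNIV - S. sel_prob D k p i * (\<integral>\<^sup>+ \<theta>. Delta D f i (restr S \<theta>) \<partial>Theta D))"
proof -
  have "admissible_policy k p"
    using opt by (simp add: optimal_policy_def)
  then interpret adaptive_selection D f k p
    by (intro adaptive_selection.intro prob sets_D nonneg_D f_meas f_submod)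
  show ?thesis
    using expected_joint_value_le[of S] by (simp add: joint_value_def)
qed

end
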